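(* Let $\gamma_1,\gamma_2,\gamma_3\in\mathbb{R}$ with $\gamma_3<0$ and $\gamma_1\ge 2|\gamma_3|$, $\gamma_2\ge 2|\gamma_3|$, and let $\mathcal{L}(X)=\frac12\sum_{k=1}^3\gamma_k(\sigma_kX\sigma_k-X)$ on $\mathcal{M}_2$. Then $e^{t\mathcal{L}}$ is a unital Schwarz map for every $t\ge 0$.
   Context: $\sigma_1,\sigma_2,\sigma_3$ are the Pauli matrices. A unital Schwarz map on $\mathcal{M}_n$ is a linear map $\Phi$ with $\Phi(\mathbb{1})=\mathbb{1}$ and $\Phi(X^\dagger X)\ge\Phi(X)^\dagger\Phi(X)$ for all $X\in\mathcal{M}_n$. The generator $\mathcal{L}$ is self-dual with respect to the Hilbert–Schmidt inner product. *)

theory Defs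
  imports "HOL-Analysis.Analysis"
begin

type_synonym cmat2 = "complex^2^2"

definition cmat :: "complex \<Rightarrow> complex \<Rightarrow> complex \<Rightarrow> complex \<Rightarrow> cmat2" where
  "cmat a b c d = vector [vector [a, b], vector [c, d]]"

definition sigma1 :: cmat2 where "sigma1 = cmat 0 1 1 0"
definition sigma2 :: cmat2 where "sigma2 = cmat 0 (- \<i>) \<i> 0"
definition sigma3 :: cmat2 where "sigma3 = cmat 1 0 0 (-1)"

definition sigma :: "nat \<Rightarrow> cmat2" where
  "sigma k = (if k = 1 then sigma1 else if k = 2 then sigma2 else sigma3)"

definition adj :: "cmat2 \<Rightarrow> cmat2" where
  "adj A = (\<chi> i j. cnj (A $ j $ i))"

definition cscale :: "complex \<Rightarrow> cmat2 \<Rightarrow> cmat2" where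
  "cscale c A = (\<chi> i j. c * A $ i $ j)"

definition psd :: "cmat2 \<Rightarrow> bool" where
  "psd A \<longleftrightarrow> (\<forall>v::complex^2. let q = (\<Sum>i\<in>UNIV. cnj (v $ i) * (A *v v) $ i)
                         in Im q = 0 \<and> Re q \<ge> 0)"

definition unital_schwarz :: "(cmat2 \<Rightarrow> cmat2) \<Rightarrow> bool" where
  "unital_schwarz \<Phi> \<longleftrightarrow>
     (\<forall>X Y. \<Phi> (X + Y) = \<Phi> X + \<Phi> Y) \<and>
     (\<forall>c X. \<Phi> (cscale c X) = cscale c (\<Phi> X)) \<and>
     \<Phi> (mat 1) = mat 1 \<and>
     (\<forall>X. psd (\<Phi> (adj X ** X) - adj (\<Phi> X) ** \<Phi> X))"

definition gen :: "(nat \<Rightarrow> real) \<Rightarrow> cmat2 \<Rightarrow> cmat2" where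
  "gen \<gamma> X = (\<Sum>k\<in>{1..3}. cscale (complex_of_real (\<gamma> k / 2)) (sigma k ** X ** sigma k - X))"

definition expmap :: "real \<Rightarrow> (cmat2 \<Rightarrow> cmat2) \<Rightarrow> cmat2 \<Rightarrow> cmat2" where
  "expmap t L X = (\<Sum>n. (t ^ n / fact n) *\<^sub>R (L ^^ n) X)"

end

theory Submission
  imports Defs
begin

text \<open>The generator is diagonal in the Pauli basis \<open>1, \<sigma>\<^sub>1, \<sigma>\<^sub>2, \<sigma>\<^sub>3\<close>, with eigenvalues
  \<open>0, -(\<gamma>\<^sub>2+\<gamma>\<^sub>3), -(\<gamma>\<^sub>1+\<gamma>\<^sub>3), -(\<gamma>\<^sub>1+\<gamma>\<^sub>2)\<close>, so \<open>e\<^sup>t\<^sup>L\<close> is the Pauli-diagonal map with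
  \<open>\<lambda>\<^sub>i = e\<^sub>j e\<^sub>k\<close>, where \<open>e\<^sub>k = exp (-t \<gamma>\<^sub>k)\<close>. For a unital Pauli-diagonal map the Schwarz
  defect \<open>\<Phi>(X\<^sup>*X) - \<Phi>(X)\<^sup>*\<Phi>(X)\<close> is Hermitian; its trace is \<open>2 \<Sum>k. (1 - \<lambda>\<^sub>k\<^sup>2) |x\<^sub>k|\<^sup>2\<close> and its
  determinant is a sum of squares weighted by \<open>1 - \<lambda>\<^sub>k\<^sup>2\<close> and by
  \<open>(1 - \<lambda>\<^sub>j\<^sup>2)(1 - \<lambda>\<^sub>k\<^sup>2) - (\<lambda>\<^sub>i - \<lambda>\<^sub>j\<lambda>\<^sub>k)\<^sup>2\<close>. So the map is Schwarz once these weights are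
  nonnegative, and for \<open>e\<^sup>t\<^sup>L\<close> this follows from \<open>e\<^sub>3 \<ge> 1\<close> (as \<open>\<gamma>\<^sub>3 < 0\<close>) and
  \<open>e\<^sub>k e\<^sub>3\<^sup>2 \<le> 1\<close> for \<open>k = 1, 2\<close> (as \<open>\<gamma>\<^sub>k \<ge> 2|\<gamma>\<^sub>3|\<close>).\<close>

lemma cmat_nth [simp]:
  "cmat a b c d $ 1 $ 1 = a" "cmat a b c d $ 1 $ 2 = b"
  "cmat a b c d $ 2 $ 1 = c" "cmat a b c d $ 2 $ 2 = d"
  by (simp_all add: cmat_def)

lemma cmat_eq_iff:
  fixes M N :: cmat2
  shows "M = N \<longleftrightarrow> M$1$1 = N$1$1 \<and> M$1$2 = N$1$2 \<and> M$2$1 = N$2$1 \<and> M$2$2 = N$2$2"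
  by (auto simp: vec_eq_iff forall_2)

lemma cmat_add [simp]: "cmat a b c d + cmat a' b' c' d' = cmat (a+a') (b+b') (c+c') (d+d')"
  by (simp add: cmat_eq_iff)

lemma cmat_diff [simp]: "cmat a b c d - cmat a' b' c' d' = cmat (a-a') (b-b') (c-c') (d-d')"
  by (simp add: cmat_eq_iff)

lemma cmat_scaleR [simp]:
  "r *\<^sub>R cmat a b c d = cmat (of_real r*a) (of_real r*b) (of_real r*c) (of_real r*d)"
  by (simp add: cmat_eq_iff, simp add: scaleR_conv_of_real)

lemma cmat_cscale [simp]: "cscale k (cmat a b c d) = cmat (k*a) (k*b) (k*c) (k*d)"
  by (simp add: cmat_eq_iff cscale_def)

lemma cmat_mult [simp]:
  "cmat a b c d ** cmat a' b' c' d' = cmat (a*a'+b*c') (a*b'+b*d') (c*a'+d*c') (c*b'+d*d')"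
  by (simp add: cmat_eq_iff matrix_matrix_mult_def sum_2)

lemma cmat_adj [simp]: "adj (cmat a b c d) = cmat (cnj a) (cnj c) (cnj b) (cnj d)"
  by (simp add: cmat_eq_iff adj_def)

lemma cmat_cases:
  obtains a b c d where "X = cmat a b c d"
  by (metis cmat_eq_iff cmat_nth)

lemma sigma_conj_cmat:
  "sigma 1 ** cmat a b c d ** sigma 1 = cmat d c b a"
  "sigma 2 ** cmat a b c d ** sigma 2 = cmat d (-c) (-b) a"
  "sigma 3 ** cmat a b c d ** sigma 3 = cmat a (-b) (-c) d"
  by (simp_all add: sigma_def sigma1_def sigma2_def sigma3_def algebra_simps)

text \<open>\<open>pauli_diag f0 f1 f2 f3\<close> multiplies the coordinates of a matrix in the basis
  \<open>1, \<sigma>\<^sub>1, \<sigma>\<^sub>2, \<sigma>\<^sub>3\<close> by \<open>f0, f1, f2, f3\<close>.\<close>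

definition pauli_diag :: "real \<Rightarrow> real \<Rightarrow> real \<Rightarrow> real \<Rightarrow> cmat2 \<Rightarrow> cmat2" where
  "pauli_diag f0 f1 f2 f3 X = cmat
     (of_real f0*(X$1$1+X$2$2)/2 + of_real f3*(X$1$1-X$2$2)/2)
     (of_real ((f1+f2)/2)*X$1$2 + of_real ((f1-f2)/2)*X$2$1)
     (of_real ((f1-f2)/2)*X$1$2 + of_real ((f1+f2)/2)*X$2$1)
     (of_real f0*(X$1$1+X$2$2)/2 - of_real f3*(X$1$1-X$2$2)/2)"

lemma pauli_diag_one: "pauli_diag 1 1 1 1 = id"
  by (simp add: fun_eq_iff pauli_diag_def cmat_eq_iff field_simps)

lemma pauli_diag_comp:
  "pauli_diag f0 f1 f2 f3 (pauli_diag g0 g1 g2 g3 X) = pauli_diag (f0*g0) (f1*g1) (f2*g2) (f3*g3) X"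
  by (simp add: pauli_diag_def cmat_eq_iff field_simps)

lemma funpow_pauli_diag:
  "pauli_diag f0 f1 f2 f3 ^^ n = pauli_diag (f0^n) (f1^n) (f2^n) (f3^n)"
  by (induction n) (simp_all add: pauli_diag_one fun_eq_iff pauli_diag_comp mult.commute)

lemma pauli_diag_decompose:
  "pauli_diag f0 f1 f2 f3 X = f0 *\<^sub>R pauli_diag 1 0 0 0 X + f1 *\<^sub>R pauli_diag 0 1 0 0 X
     + f2 *\<^sub>R pauli_diag 0 0 1 0 X + f3 *\<^sub>R pauli_diag 0 0 0 1 X"
  by (simp add: pauli_diag_def cmat_eq_iff field_simps)

lemma expmap_pauli_diag:
  "expmap t (pauli_diag f0 f1 f2 f3) = pauli_diag (exp (t*f0)) (exp (t*f1)) (exp (t*f2)) (exp (t*f3))"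
proof
  fix X
  define M where "M g0 g1 g2 g3 = pauli_diag g0 g1 g2 g3 X" for g0 g1 g2 g3
  have "(\<lambda>n. (t ^ n / fact n) *\<^sub>R (pauli_diag f0 f1 f2 f3 ^^ n) X) =
     (\<lambda>n. ((t*f0)^n /\<^sub>R fact n) *\<^sub>R M 1 0 0 0 + ((t*f1)^n /\<^sub>R fact n) *\<^sub>R M 0 1 0 0
        + ((t*f2)^n /\<^sub>R fact n) *\<^sub>R M 0 0 1 0 + ((t*f3)^n /\<^sub>R fact n) *\<^sub>R M 0 0 0 1)"
    unfolding funpow_pauli_diag M_def
    by (subst pauli_diag_decompose) (simp add: scaleR_add_right power_mult_distrib field_simps)
  also have "\<dots> sums (exp (t*f0) *\<^sub>R M 1 0 0 0 + exp (t*f1) *\<^sub>R M 0 1 0 0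
        + exp (t*f2) *\<^sub>R M 0 0 1 0 + exp (t*f3) *\<^sub>R M 0 0 0 1)"
    by (intro sums_add sums_scaleR_left exp_converges)
  finally show "expmap t (pauli_diag f0 f1 f2 f3) X = pauli_diag (exp (t*f0)) (exp (t*f1)) (exp (t*f2)) (exp (t*f3)) X"
    unfolding expmap_def M_def by (subst (asm) pauli_diag_decompose[symmetric]) (rule sums_unique[symmetric])
qed

lemma gen_eq_pauli_diag:
  "gen \<gamma> = pauli_diag 0 (-(\<gamma> 2+\<gamma> 3)) (-(\<gamma> 1+\<gamma> 3)) (-(\<gamma> 1+\<gamma> 2))"
proof
  fix X :: cmat2
  obtain a b c d where X: "X = cmat a b c d" by (rule cmat_cases)
  have sum3: "(\<Sum>k\<in>{1..3::nat}. f k) = f 1 + f 2 + f 3" for f :: "nat \<Rightarrow> cmat2"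
  proof -
    have "{1..3::nat} = {1,2,3}" by auto
    then show ?thesis by (simp add: add.assoc)
  qed
  show "gen \<gamma> X = pauli_diag 0 (-(\<gamma> 2+\<gamma> 3)) (-(\<gamma> 1+\<gamma> 3)) (-(\<gamma> 1+\<gamma> 2)) X"
    unfolding gen_def X sum3 sigma_conj_cmat by (simp add: pauli_diag_def cmat_eq_iff field_simps)
qed

lemma two_mult_le_weighted_squares:
  fixes P R m a b :: real
  assumes "P \<ge> 0" "R \<ge> 0" "m \<ge> 0" "a \<ge> 0" "b \<ge> 0" "m^2 \<le> P * R"
  shows "2 * (a * m * b) \<le> P * a^2 + R * b^2"
proof (rule power2_le_imp_le)
  have "(2 * (a * m * b))^2 = 4 * a^2 * b^2 * m^2" by (simp add: power_mult_distrib)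
  also have "\<dots> \<le> 4 * a^2 * b^2 * (P * R)"
    using assms by (intro mult_left_mono) auto
  also have "\<dots> \<le> (P * a^2 + R * b^2)^2"
  proof -
    have "0 \<le> (P * a^2 - R * b^2)^2" by simp
    then show ?thesis by (simp add: power2_eq_square algebra_simps)
  qed
  finally show "(2 * (a * m * b))^2 \<le> (P * a^2 + R * b^2)^2" .
  show "0 \<le> P * a^2 + R * b^2" using assms by simp
qed

lemma psd_hermitian_cmatI:
  assumes "Im p = 0" "Im r = 0" "Re p + Re r \<ge> 0" "(cmod q)^2 \<le> Re p * Re r"
  shows "psd (cmat p q (cnj q) r)"
  unfolding psd_def Let_def
proof
  fix v :: "complex^2"
  define P R where "P = Re p" and "R = Re r"
  define w where "w = cnj (v$1) * q * v$2"
  have p: "p = of_real P" and r: "r = of_real R"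
    using assms(1,2) unfolding P_def R_def by (simp_all add: complex_eq_iff)
  have PR: "P \<ge> 0" "R \<ge> 0"
  proof -
    have "P * R \<ge> 0" using assms(4) unfolding P_def R_def by (meson order_trans zero_le_power2)
    then show "P \<ge> 0" "R \<ge> 0" using assms(3) unfolding P_def R_def
      by (smt (verit) mult_nonneg_nonneg mult_nonpos_nonpos zero_le_mult_iff)+
  qed
  have "(\<Sum>i\<in>UNIV. cnj (v $ i) * (cmat p q (cnj q) r *v v) $ i)
     = cnj (v$1) * (p * v$1 + q * v$2) + cnj (v$2) * (cnj q * v$1 + r * v$2)"
    by (simp add: sum_2 matrix_vector_mult_def)
  also have "\<dots> = p * (v$1 * cnj (v$1)) + r * (v$2 * cnj (v$2)) + (w + cnj w)"
    unfolding w_def by (simp add: algebra_simps)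
  also have "\<dots> = of_real (P * (cmod (v$1))^2 + R * (cmod (v$2))^2 + 2 * Re w)"
    unfolding p r complex_norm_square[symmetric] complex_add_cnj by simp
  finally have form: "(\<Sum>i\<in>UNIV. cnj (v $ i) * (cmat p q (cnj q) r *v v) $ i)
      = of_real (P * (cmod (v$1))^2 + R * (cmod (v$2))^2 + 2 * Re w)" .
  have "\<bar>Re w\<bar> \<le> cmod (v$1) * cmod q * cmod (v$2)"
    using abs_Re_le_cmod[of w] unfolding w_def by (simp add: norm_mult)
  moreover have "2 * (cmod (v$1) * cmod q * cmod (v$2)) \<le> P * (cmod (v$1))^2 + R * (cmod (v$2))^2"
    using PR assms(4) unfolding P_def R_def by (intro two_mult_le_weighted_squares) auto
  ultimately have "0 \<le> P * (cmod (v$1))^2 + R * (cmod (v$2))^2 + 2 * Re w" by linarith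
  then show "Im (\<Sum>i\<in>UNIV. cnj (v $ i) * (cmat p q (cnj q) r *v v) $ i) = 0 \<and>
      0 \<le> Re (\<Sum>i\<in>UNIV. cnj (v $ i) * (cmat p q (cnj q) r *v v) $ i)"
    unfolding form by simp
qed

definition schwarz_defect :: "(cmat2 \<Rightarrow> cmat2) \<Rightarrow> cmat2 \<Rightarrow> cmat2" where
  "schwarz_defect \<Phi> X = \<Phi> (adj X ** X) - adj (\<Phi> X) ** \<Phi> X"

text \<open>The hypothesis on \<open>X\<close> says \<open>X = \<Sum>k. (y\<^sub>k + \<i> z\<^sub>k) \<sigma>\<^sub>k\<close> with \<open>\<sigma>\<^sub>0 = 1\<close>;
  in the determinant, \<open>(w1, w2, w3)\<close> is the cross product of \<open>(y1, y2, y3)\<close> and \<open>(z1, z2, z3)\<close>.\<close>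

lemma schwarz_defect_pauli_diag_hermitian:
  fixes y0 y1 y2 y3 z0 z1 z2 z3 l1 l2 l3 :: real
  assumes X: "X = cmat (Complex (y0+y3) (z0+z3)) (Complex (y1+z2) (z1-y2))
                       (Complex (y1-z2) (z1+y2)) (Complex (y0-y3) (z0-z3))"
  defines "D \<equiv> schwarz_defect (pauli_diag 1 l1 l2 l3) X"
  shows "Im (D$1$1) = 0" "Im (D$2$2) = 0" "D$2$1 = cnj (D$1$2)"
    "Re (D$1$1) + Re (D$2$2) =
       2 * ((1-l1^2)*(y1^2+z1^2) + (1-l2^2)*(y2^2+z2^2) + (1-l3^2)*(y3^2+z3^2))"
  unfolding D_def X schwarz_defect_def
  by (simp_all add: pauli_diag_def complex_eq_iff field_simps power2_eq_square)

lemma schwarz_defect_pauli_diag_det: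
  fixes y0 y1 y2 y3 z0 z1 z2 z3 l1 l2 l3 :: real
  assumes X: "X = cmat (Complex (y0+y3) (z0+z3)) (Complex (y1+z2) (z1-y2))
                       (Complex (y1-z2) (z1+y2)) (Complex (y0-y3) (z0-z3))"
  defines "D \<equiv> schwarz_defect (pauli_diag 1 l1 l2 l3) X"
  defines "A1 \<equiv> 1 - l1^2" and "A2 \<equiv> 1 - l2^2" and "A3 \<equiv> 1 - l3^2"
  defines "C1 \<equiv> l1 - l2*l3" and "C2 \<equiv> l2 - l1*l3" and "C3 \<equiv> l3 - l1*l2"
  defines "P \<equiv> A1*y1^2 + A2*y2^2 + A3*y3^2" and "Q \<equiv> A1*z1^2 + A2*z2^2 + A3*z3^2"
    and "R \<equiv> A1*y1*z1 + A2*y2*z2 + A3*y3*z3"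
  defines "w1 \<equiv> y2*z3 - y3*z2" and "w2 \<equiv> y3*z1 - y1*z3" and "w3 \<equiv> y1*z2 - y2*z1"
  shows "Re (D$1$1) * Re (D$2$2) - (cmod (D$1$2))^2 =
    (P - Q)^2 + 4*R^2 + 4*((A2*A3 - C1^2)*w1^2 + (A1*A3 - C2^2)*w2^2 + (A1*A2 - C3^2)*w3^2)"
  unfolding D_def X schwarz_defect_def cmod_power2 P_def Q_def R_def
    w1_def w2_def w3_def A1_def A2_def A3_def C1_def C2_def C3_def
  by (simp add: pauli_diag_def field_simps power2_eq_square)

lemma mult_le_one_if_mult_square_le_one:
  fixes A C :: real
  assumes "A \<ge> 0" "C \<ge> 1" "A * C^2 \<le> 1"
  shows "A * C \<le> 1"
proof -
  have "A * C * 1 \<le> A * C * C" using assms by (intro mult_left_mono) auto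
  then show ?thesis using assms(3) by (simp add: power2_eq_square mult.assoc)
qed

text \<open>Below, \<open>A, B, C\<close> stand for \<open>e\<^sub>1\<^sup>2, e\<^sub>2\<^sup>2, e\<^sub>3\<^sup>2\<close>; the two inequalities are the conditions
  \<open>(\<lambda>\<^sub>i - \<lambda>\<^sub>j\<lambda>\<^sub>k)\<^sup>2 \<le> (1 - \<lambda>\<^sub>j\<^sup>2)(1 - \<lambda>\<^sub>k\<^sup>2)\<close> for \<open>\<lambda> = (e\<^sub>2e\<^sub>3, e\<^sub>1e\<^sub>3, e\<^sub>1e\<^sub>2)\<close>.\<close>

context
  fixes A B C :: real
  assumes nonneg: "A \<ge> 0" "B \<ge> 0" and C_ge_1: "C \<ge> 1"
    and bounds: "A * C^2 \<le> 1" "B * C^2 \<le> 1"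
begin

lemma AB_cross_ineq: "A * B * (1 - C)^2 \<le> (1 - B*C) * (1 - A*C)"
proof -
  have "2*C - 1 \<le> C^2"
    using zero_le_power2[of "C - 1"] by (simp add: power2_eq_square algebra_simps)
  then have "A * (2*C - 1) \<le> A * C^2" "B * (2*C - 1) \<le> B * C^2"
    using nonneg by (auto intro: mult_left_mono)
  then have "A * (C - 1) \<le> 1 - A*C" "B * (C - 1) \<le> 1 - B*C"
    using bounds by (simp_all add: algebra_simps)
  moreover have "0 \<le> A * (C - 1)" "0 \<le> B * (C - 1)"
    using nonneg C_ge_1 by simp_all
  ultimately have "(A * (C - 1)) * (B * (C - 1)) \<le> (1 - A*C) * (1 - B*C)"
    by (meson mult_mono order_trans)
  then show ?thesis by (simp add: power2_eq_square algebra_simps)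
qed

lemma BC_cross_ineq: "B * C * (1 - A)^2 \<le> (1 - A*C) * (1 - A*B)"
proof -
  define K where "K = A * (1 - A*C) + C * (1 - A)^2"
  have "A * C \<le> 1"
    using mult_le_one_if_mult_square_le_one nonneg C_ge_1 bounds by blast
  then have K_nonneg: "K \<ge> 0" unfolding K_def using nonneg C_ge_1 by simp
  have "C^2 * (B * K) \<le> K"
    using mult_right_mono[OF bounds(2) K_nonneg] by (simp add: algebra_simps)
  moreover have "K \<le> C^2 * (1 - A*C)"
  proof -
    have cubic: "C^3 - 2*C + 1 \<ge> 0"
    proof -
      have "C^3 - 2*C + 1 = (C - 1) * (C^2 + C - 1)"
        by (simp add: power2_eq_square power3_eq_cube algebra_simps)
      moreover have "C^2 + C - 1 \<ge> 0" using C_ge_1 by (smt (verit) one_le_power)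
      ultimately show ?thesis using C_ge_1 by simp
    qed
    have "0 \<le> (C - 1)^3 * (C + 1)" using C_ge_1 by simp
    also have "\<dots> = C^4 - C^3 - 1 * (C^3 - 2*C + 1)"
      by (simp add: power2_eq_square power3_eq_cube algebra_simps eval_nat_numeral)
    also have "\<dots> \<le> C^4 - C^3 - (A * C^2) * (C^3 - 2*C + 1)"
      using mult_right_mono[OF bounds(1) cubic] by linarith
    also have "\<dots> = C^2 * (C^2 - C - A * (C^3 - 2*C + 1))"
      by (simp add: power2_eq_square power3_eq_cube algebra_simps eval_nat_numeral)
    finally have "C^2 - C - A * (C^3 - 2*C + 1) \<ge> 0"
      using C_ge_1 by (simp add: zero_le_mult_iff)
    moreover have "C^2 * (1 - A*C) - K = C^2 - C - A * (C^3 - 2*C + 1)"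
      unfolding K_def by (simp add: power2_eq_square power3_eq_cube algebra_simps)
    ultimately show ?thesis by linarith
  qed
  ultimately have "C^2 * ((1 - A*C) - B * K) \<ge> 0"
    by (simp add: algebra_simps)
  then have "(1 - A*C) - B * K \<ge> 0" using C_ge_1 by (simp add: zero_le_mult_iff)
  moreover have "(1 - A*C) * (1 - A*B) - B * C * (1 - A)^2 = (1 - A*C) - B * K"
    unfolding K_def by (simp add: power2_eq_square algebra_simps)
  ultimately show ?thesis by simp
qed

end

lemma unital_schwarz_pauli_diag:
  fixes l1 l2 l3 :: real
  assumes A: "l1^2 \<le> 1" "l2^2 \<le> 1" "l3^2 \<le> 1"
    and C: "(l1 - l2*l3)^2 \<le> (1-l2^2)*(1-l3^2)" "(l2 - l1*l3)^2 \<le> (1-l1^2)*(1-l3^2)"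
      "(l3 - l1*l2)^2 \<le> (1-l1^2)*(1-l2^2)"
  shows "unital_schwarz (pauli_diag 1 l1 l2 l3)"
  unfolding unital_schwarz_def schwarz_defect_def[symmetric]
proof (intro conjI allI)
  show "pauli_diag 1 l1 l2 l3 (X + Y) = pauli_diag 1 l1 l2 l3 X + pauli_diag 1 l1 l2 l3 Y" for X Y
    by (simp add: pauli_diag_def cmat_eq_iff field_simps)
  show "pauli_diag 1 l1 l2 l3 (cscale c X) = cscale c (pauli_diag 1 l1 l2 l3 X)" for c X
    by (simp add: pauli_diag_def cmat_eq_iff cscale_def field_simps)
  show "pauli_diag 1 l1 l2 l3 (mat 1) = mat 1"
    by (simp add: pauli_diag_def cmat_eq_iff mat_def)
  show "psd (schwarz_defect (pauli_diag 1 l1 l2 l3) X)" for X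
  proof -
    define y0 z0 y3 z3 where "y0 = Re (X$1$1 + X$2$2)/2" and "z0 = Im (X$1$1 + X$2$2)/2"
      and "y3 = Re (X$1$1 - X$2$2)/2" and "z3 = Im (X$1$1 - X$2$2)/2"
    define y1 z1 y2 z2 where "y1 = Re (X$1$2 + X$2$1)/2" and "z1 = Im (X$1$2 + X$2$1)/2"
      and "y2 = Im (X$2$1 - X$1$2)/2" and "z2 = Re (X$1$2 - X$2$1)/2"
    have X: "X = cmat (Complex (y0+y3) (z0+z3)) (Complex (y1+z2) (z1-y2))
                      (Complex (y1-z2) (z1+y2)) (Complex (y0-y3) (z0-z3))"
      unfolding y0_def z0_def y3_def z3_def y1_def z1_def y2_def z2_def
      by (simp add: cmat_eq_iff complex_eq_iff field_simps)
    define D where "D = schwarz_defect (pauli_diag 1 l1 l2 l3) X"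
    note herm = schwarz_defect_pauli_diag_hermitian[OF X, of l1 l2 l3, folded D_def]
    note det = schwarz_defect_pauli_diag_det[OF X, of l1 l2 l3, folded D_def]
    have "D = cmat (D$1$1) (D$1$2) (cnj (D$1$2)) (D$2$2)"
      using herm(3) by (simp add: cmat_eq_iff)
    also have "psd \<dots>"
    proof (rule psd_hermitian_cmatI)
      show "Im (D$1$1) = 0" "Im (D$2$2) = 0" by (fact herm(1), fact herm(2))
      show "0 \<le> Re (D$1$1) + Re (D$2$2)"
        unfolding herm(4) using A by (intro mult_nonneg_nonneg add_nonneg_nonneg) auto
      have "0 \<le> Re (D$1$1) * Re (D$2$2) - (cmod (D$1$2))^2"
        unfolding det using C by (intro add_nonneg_nonneg mult_nonneg_nonneg) (auto simp: algebra_simps)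
      then show "(cmod (D$1$2))^2 \<le> Re (D$1$1) * Re (D$2$2)" by simp
    qed
    finally show ?thesis unfolding D_def .
  qed
qed

lemma unital_schwarz_pauli_diag_products:
  fixes e1 e2 e3 :: real
  assumes nonneg: "e1 \<ge> 0" "e2 \<ge> 0" and e3: "e3 \<ge> 1"
    and bounds: "e1 * e3^2 \<le> 1" "e2 * e3^2 \<le> 1"
  shows "unital_schwarz (pauli_diag 1 (e2*e3) (e1*e3) (e1*e2))"
proof -
  define A B C where "A = e1^2" and "B = e2^2" and "C = e3^2"
  have ABC: "A \<ge> 0" "B \<ge> 0" "C \<ge> 1"
    unfolding A_def B_def C_def using e3 by (simp_all add: one_le_power)
  have "A * C^2 = (e1 * e3^2)^2" "B * C^2 = (e2 * e3^2)^2"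
    unfolding A_def B_def C_def by (simp_all add: power_mult_distrib power_mult[symmetric])
  then have bounds': "A * C^2 \<le> 1" "B * C^2 \<le> 1"
    using nonneg e3 bounds by (simp_all add: power_le_one)
  have AC: "A * C \<le> 1" and BC: "B * C \<le> 1"
    using mult_le_one_if_mult_square_le_one ABC bounds' by blast+
  have AB: "A * B \<le> 1"
    using ABC AC BC mult_left_mono[OF \<open>C \<ge> 1\<close>, of A] mult_left_mono[OF \<open>C \<ge> 1\<close>, of B]
    by (simp add: mult_le_one)
  have squares: "(e2*e3)^2 = B*C" "(e1*e3)^2 = A*C" "(e1*e2)^2 = A*B"
    unfolding A_def B_def C_def by (simp_all add: power_mult_distrib)
  have cross: "(e2*e3 - e1*e3*(e1*e2))^2 = B*C*(1-A)^2"
    "(e1*e3 - e2*e3*(e1*e2))^2 = A*C*(1-B)^2"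
    "(e1*e2 - e2*e3*(e1*e3))^2 = A*B*(1-C)^2"
    unfolding A_def B_def C_def by (simp_all add: power2_eq_square algebra_simps)
  show ?thesis
    using AB_cross_ineq[OF ABC bounds'] BC_cross_ineq[OF ABC bounds']
      BC_cross_ineq[OF ABC(2,1,3) bounds'(2,1)] AC BC AB
    by (intro unital_schwarz_pauli_diag) (simp_all only: squares cross, simp_all add: mult.commute)
qed

theorem mainTheorem4:
  fixes \<gamma> :: "nat \<Rightarrow> real"
  assumes "\<gamma> 3 < 0"
    and "\<gamma> 1 \<ge> 2 * \<bar>\<gamma> 3\<bar>"
    and "\<gamma> 2 \<ge> 2 * \<bar>\<gamma> 3\<bar>"
  shows "\<forall>t::real. t \<ge> 0 \<longrightarrow> unital_schwarz (expmap t (gen \<gamma>))"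
proof (intro allI impI)
  fix t :: real
  assume t: "t \<ge> 0"
  define e where "e k = exp (- (t * \<gamma> k))" for k
  have "expmap t (gen \<gamma>) = pauli_diag 1 (e 2 * e 3) (e 1 * e 3) (e 1 * e 2)"
    unfolding gen_eq_pauli_diag expmap_pauli_diag e_def
    by (simp add: exp_add[symmetric] algebra_simps)
  moreover have "e 3 \<ge> 1"
    using t assms(1) by (simp add: e_def mult_nonneg_nonpos)
  moreover have "e k * (e 3)^2 \<le> 1" if "\<gamma> k \<ge> 2 * \<bar>\<gamma> 3\<bar>" for k
  proof -
    have "t * (\<gamma> k + 2 * \<gamma> 3) \<ge> 0" using t assms(1) that by simp
    then show ?thesis
      by (simp add: e_def power2_eq_square exp_add[symmetric] algebra_simps)
  qed
  ultimately show "unital_schwarz (expmap t (gen \<gamma>))"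
    using assms(2,3) by (simp add: unital_schwarz_pauli_diag_products e_def)
qed

end
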